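(* Let $\theta>0$. For every $x\in\mathbb{R}$, the Hölder exponent of $f_\theta$ at $x$ is \[ H_{f_\theta}(x)=\begin{cases}0 & \text{if } x \text{ is rational},\\ \theta/\tau(x) & \text{if } x \text{ is irrational}.\end{cases} \]
   Context: For $\theta>0$, the generalized Thomae function $f_\theta:\mathbb{R}\to\mathbb{R}$ is defined by $f_\theta(0)=1$, $f_\theta(x)=q^{-\theta}$ if $x$ is rational written as $x=p/q$ with $p\in\mathbb{Z}$, $q\in\mathbb{N}$ and $\gcd(p,q)=1$, and $f_\theta(x)=0$ if $x$ is irrational. For a locally bounded $f:\mathbb{R}\to\mathbb{R}$, $x\in\mathbb{R}$ and $\alpha\ge0$, one writes $f\in\Lambda^\alpha(x)$ if there exist a constant $C>0$ and a polynomial $P$ of degree less than $\alpha$ such that $|f(x+h)-P(h)|\le C|h|^\alpha$ for all $h$ in a neighborhood of $0$. The Hölder exponent of $f$ at $x$ is $H_f(x)=\sup\{\alpha\ge0: f\in\Lambda^\alpha(x)\}$. The irrationality exponent $\tau(x)$ of an irrational number $x$ is the supremum of the real numbers $\tau$ for which the inequality $|x-p/q|<q^{-\tau}$ has infinitely many solutions in nonzero integers $p,q$; one has $\tau(x)\ge2$, and $\tau(x)$ may equal $+\infty$, in which case $\theta/\tau(x)$ is read as $0$. *)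

theory Defs
  imports "HOL-Analysis.Analysis" "HOL-Computational_Algebra.Polynomial" "HOL-Library.Extended_Real"
begin

definition rat_denom :: "real \<Rightarrow> int" where
  "rat_denom x = snd (quotient_of (THE r. of_rat r = x))"

definition thomae :: "real \<Rightarrow> real \<Rightarrow> real" where
  "thomae \<theta> x = (if x = 0 then 1
                  else if x \<in> \<rat> then (real_of_int (rat_denom x)) powr (- \<theta>)
                  else 0)"

(* |h|^alpha with the convention |h|^0 = 1 (also for h = 0) *)
definition habs_pow :: "real \<Rightarrow> real \<Rightarrow> real" where
  "habs_pow h \<alpha> = (if \<alpha> = 0 then 1 else \<bar>h\<bar> powr \<alpha>)"

(* f \<in> Lambda^alpha(x): polynomial P of degree < alpha (zero polynomial has degree -infinity) *)
definition holder_class :: "real \<Rightarrow> (real \<Rightarrow> real) \<Rightarrow> real \<Rightarrow> bool" where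
  "holder_class \<alpha> f x \<longleftrightarrow>
     (\<exists>C>0. \<exists>P :: real poly. (P = 0 \<or> real (degree P) < \<alpha>) \<and>
        (\<exists>\<epsilon>>0. \<forall>h. \<bar>h\<bar> < \<epsilon> \<longrightarrow> \<bar>f (x + h) - poly P h\<bar> \<le> C * habs_pow h \<alpha>))"

definition holder_exponent :: "(real \<Rightarrow> real) \<Rightarrow> real \<Rightarrow> ereal" where
  "holder_exponent f x = Sup (ereal ` {\<alpha>. \<alpha> \<ge> 0 \<and> holder_class \<alpha> f x})"

definition irrationality_exponent :: "real \<Rightarrow> ereal" where
  "irrationality_exponent x = Sup (ereal ` {\<tau>::real.
      infinite {(p::int, q::int). p \<noteq> 0 \<and> q \<noteq> 0 \<and>
                 \<bar>x - real_of_int p / real_of_int q\<bar> < \<bar>real_of_int q\<bar> powr (- \<tau>)}})"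

end

theory Submission
  imports Defs
begin

(* Because f_theta vanishes on the dense set of irrationals, the polynomial in a Hoelder
   estimate of positive order alpha at x is itself O(|h|^alpha), so f_theta in Lambda^alpha(x)
   amounts to f_theta(x + h) <= C |h|^alpha near 0.  At a rational x this already fails at
   h = 0.  At an irrational x, evaluating at an approximation with |x - p/q| < |q|^-tau gives
   |q|^-theta <= f_theta(p/q) <= C |q|^-(tau alpha), which for arbitrarily large |q| forces
   tau alpha <= theta.  Conversely, if only finitely many such approximations exist for
   tau = theta/alpha, then on a neighbourhood of x avoiding them every a/b in lowest terms
   satisfies b^-tau <= |x - a/b|, that is f_theta(a/b) <= |x - a/b|^alpha. *)

lemma continuous_on_le_off_countable:
  fixes f g :: "'a::euclidean_space \<Rightarrow> real"
  assumes "open S" "continuous_on S f" "continuous_on S g" "countable N"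
    and "\<And>z. z \<in> S \<Longrightarrow> z \<notin> N \<Longrightarrow> f z \<le> g z" and "y \<in> S"
  shows "f y \<le> g y"
proof (rule ccontr)
  assume "\<not> f y \<le> g y"
  obtain A where "open A" and A: "A \<inter> S = {z \<in> S. g z < f z}"
    using open_Collect_less_Int[OF assms(3,2)] by blast
  have "y \<in> A \<inter> S" using A \<open>\<not> f y \<le> g y\<close> assms(6) by auto
  moreover have "open (A \<inter> S)" using \<open>open A\<close> assms(1) by blast
  ultimately obtain e where "e > 0" "ball y e \<subseteq> A \<inter> S" by (meson openE)
  moreover have "\<not> ball y e \<subseteq> N"
    using uncountable_ball[OF \<open>e > 0\<close>] assms(4) countable_subset by blast
  ultimately obtain z where "z \<in> A \<inter> S" "z \<notin> N" by blast
  then show False using A assms(5) by fastforce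
qed

lemma ereal_le_divide_iff_swap:
  fixes T :: ereal
  assumes "T > 0" "a > 0" "b > 0"
  shows "ereal a \<le> ereal b / T \<longleftrightarrow> T \<le> ereal (b / a)"
  using assms by (cases T) (auto simp: field_simps)

lemma ereal_less_divide_iff_swap:
  fixes T :: ereal
  assumes "T > 0" "a > 0" "b > 0"
  shows "ereal a < ereal b / T \<longleftrightarrow> T < ereal (b / a)"
  using assms by (cases T) (auto simp: field_simps)

lemma Sup_ereal_image_eqI:
  fixes B :: "real set" and c :: ereal
  assumes "0 \<in> B" "\<And>\<alpha>. \<alpha> \<in> B \<Longrightarrow> ereal \<alpha> \<le> c" "\<And>\<alpha>. 0 < \<alpha> \<Longrightarrow> ereal \<alpha> < c \<Longrightarrow> \<alpha> \<in> B"
  shows "Sup (ereal ` B) = c"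
proof (rule antisym)
  show "Sup (ereal ` B) \<le> c" using assms(2) by (auto intro: Sup_least)
  show "c \<le> Sup (ereal ` B)"
  proof (unfold le_Sup_iff, intro allI impI)
    fix y assume "y < c"
    show "\<exists>z\<in>ereal ` B. y < z"
    proof (cases "y < 0")
      case True
      then show ?thesis using assms(1) by (force simp: zero_ereal_def)
    next
      case False
      obtain \<alpha> where "y < ereal \<alpha>" "ereal \<alpha> < c" using ereal_dense2[OF \<open>y < c\<close>] by blast
      moreover from this(1) False have "\<alpha> > 0" by (cases y) auto
      ultimately show ?thesis using assms(3) by blast
    qed
  qed
qed

lemma rat_denom_of_rat: "rat_denom (of_rat r) = snd (quotient_of r)"
  unfolding rat_denom_def by (simp add: of_rat_eq_iff)

lemma rat_denomE:
  assumes "y \<in> \<rat>"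
  obtains a where "rat_denom y > 0" "y = of_int a / of_int (rat_denom y)" "coprime a (rat_denom y)"
proof -
  obtain r where r: "y = of_rat r" using assms Rats_cases by blast
  obtain a b where ab: "quotient_of r = (a, b)" by (cases "quotient_of r")
  have "rat_denom y = b" using ab by (simp add: r rat_denom_of_rat)
  moreover have "y = of_int a / of_int b"
    using quotient_of_div[OF ab] r by (simp add: of_rat_divide)
  ultimately show thesis
    using that quotient_of_denom_pos[OF ab] quotient_of_coprime[OF ab] by simp
qed

lemma rat_denom_pos: "y \<in> \<rat> \<Longrightarrow> rat_denom y > 0"
  by (rule rat_denomE)

lemma rat_denom_le:
  assumes "q \<noteq> 0"
  shows "rat_denom (of_int p / of_int q) \<le> \<bar>q\<bar>"
proof -
  define b where "b = rat_denom (of_int p / of_int q)"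
  obtain a where b: "b > 0" "(of_int p / of_int q :: real) = of_int a / of_int b" "coprime a b"
    using rat_denomE[of "of_int p / of_int q"] unfolding b_def by auto
  have "real_of_int (p * b) = real_of_int (a * q)"
    using b(1,2) assms by (simp add: field_simps)
  then have "b dvd a * q" by (metis dvd_triv_right of_int_eq_iff)
  then have "b dvd q" using b(3) by (metis coprime_commute coprime_dvd_mult_right_iff)
  then show ?thesis using dvd_imp_le_int[OF assms] b(1) unfolding b_def by fastforce
qed

lemma thomae_nonneg: "thomae \<theta> y \<ge> 0"
  unfolding thomae_def by auto

lemma thomae_le_one:
  assumes "\<theta> \<ge> 0"
  shows "thomae \<theta> y \<le> 1"
proof (cases "y \<in> \<rat>")
  case True
  then have "real_of_int (rat_denom y) \<ge> 1" using rat_denom_pos by fastforce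
  then have "real_of_int (rat_denom y) powr (- \<theta>) \<le> 1"
    using assms by (simp add: powr_minus_divide ge_one_powr_ge_zero)
  then show ?thesis unfolding thomae_def by simp
qed (simp add: thomae_def)

lemma thomae_Rats_pos: "y \<in> \<rat> \<Longrightarrow> thomae \<theta> y > 0"
  unfolding thomae_def using rat_denom_pos by fastforce

lemma thomae_Rats: "y \<in> \<rat> \<Longrightarrow> y \<noteq> 0 \<Longrightarrow> thomae \<theta> y = real_of_int (rat_denom y) powr (- \<theta>)"
  unfolding thomae_def by simp

lemma thomae_not_Rats: "y \<notin> \<rat> \<Longrightarrow> thomae \<theta> y = 0"
  unfolding thomae_def by auto

lemma thomae_of_int_divide_ge:
  assumes "\<theta> \<ge> 0" "p \<noteq> 0" "q \<noteq> 0"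
  shows "\<bar>real_of_int q\<bar> powr (- \<theta>) \<le> thomae \<theta> (of_int p / of_int q)"
proof -
  define y :: real where "y = of_int p / of_int q"
  have "y \<in> \<rat>" "y \<noteq> 0" using assms unfolding y_def by auto
  moreover have "0 < rat_denom y" using \<open>y \<in> \<rat>\<close> by (rule rat_denom_pos)
  moreover have "rat_denom y \<le> \<bar>q\<bar>" using rat_denom_le[OF assms(3)] unfolding y_def .
  ultimately have "\<bar>real_of_int q\<bar> powr (- \<theta>) \<le> real_of_int (rat_denom y) powr (- \<theta>)"
    using assms(1) by (intro powr_mono2') auto
  then show ?thesis
    unfolding y_def[symmetric] thomae_Rats[OF \<open>y \<in> \<rat>\<close> \<open>y \<noteq> 0\<close>] .
qed

lemma holder_class_zeroI:
  assumes "\<And>y. \<bar>f y\<bar> \<le> M"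
  shows "holder_class 0 f x"
proof -
  have "\<bar>f (x + h) - poly 0 h\<bar> \<le> max M 1 * habs_pow h 0" for h
    using assms[of "x + h"] by (simp add: habs_pow_def)
  then show ?thesis unfolding holder_class_def
    by (intro exI[of _ "max M 1"] conjI exI[of _ "0 :: real poly"] exI[of _ 1]) auto
qed

lemma holder_classI:
  assumes "\<alpha> > 0" "C > 0" "\<epsilon> > 0" "\<And>h. \<bar>h\<bar> < \<epsilon> \<Longrightarrow> \<bar>f (x + h)\<bar> \<le> C * \<bar>h\<bar> powr \<alpha>"
  shows "holder_class \<alpha> f x"
  unfolding holder_class_def habs_pow_def using assms by force

lemma holder_classE:
  assumes "\<alpha> > 0" "holder_class \<alpha> f x"
  obtains C P \<epsilon> where "C > 0" "\<epsilon> > 0"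
    "\<And>h. \<bar>h\<bar> < \<epsilon> \<Longrightarrow> \<bar>f (x + h) - poly P h\<bar> \<le> C * \<bar>h\<bar> powr \<alpha>"
proof -
  from assms(2) obtain C P \<epsilon> where "C > 0" "\<epsilon> > 0"
    "\<forall>h. \<bar>h\<bar> < \<epsilon> \<longrightarrow> \<bar>f (x + h) - poly P h\<bar> \<le> C * habs_pow h \<alpha>"
    unfolding holder_class_def by blast
  with that[of C \<epsilon> P] assms(1) show thesis by (simp add: habs_pow_def)
qed

lemma holder_class_vanishing_off_Rats:
  fixes f :: "real \<Rightarrow> real"
  assumes "\<alpha> > 0" "holder_class \<alpha> f x" "\<And>y. y \<notin> \<rat> \<Longrightarrow> f y = 0"
  obtains C \<epsilon> where "C > 0" "\<epsilon> > 0" "\<And>h. \<bar>h\<bar> < \<epsilon> \<Longrightarrow> \<bar>f (x + h)\<bar> \<le> C * \<bar>h\<bar> powr \<alpha>"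
proof -
  obtain C P \<epsilon> where "C > 0" "\<epsilon> > 0"
    and approx: "\<And>h. \<bar>h\<bar> < \<epsilon> \<Longrightarrow> \<bar>f (x + h) - poly P h\<bar> \<le> C * \<bar>h\<bar> powr \<alpha>"
    using holder_classE[OF assms(1,2)] by metis
  have poly_bound: "\<bar>poly P h\<bar> \<le> C * \<bar>h\<bar> powr \<alpha>" if "\<bar>h\<bar> < \<epsilon>" for h
  proof (rule continuous_on_le_off_countable[where S = "ball 0 \<epsilon>" and N = "(\<lambda>r. r - x) ` \<rat>"
        and f = "\<lambda>h. \<bar>poly P h\<bar>" and g = "\<lambda>h. C * \<bar>h\<bar> powr \<alpha>"])
    show "continuous_on (ball 0 \<epsilon>) (\<lambda>h. C * \<bar>h\<bar> powr \<alpha>)"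
      using assms(1) by (intro continuous_intros continuous_on_powr') auto
    show "continuous_on (ball 0 \<epsilon>) (\<lambda>h. \<bar>poly P h\<bar>)" by (intro continuous_intros)
    show "countable ((\<lambda>r. r - x) ` \<rat>)" by (simp add: countable_rat)
  next
    fix z assume z: "z \<in> ball 0 \<epsilon>" "z \<notin> (\<lambda>r. r - x) ` \<rat>"
    have "x + z \<notin> \<rat>"
    proof
      assume "x + z \<in> \<rat>"
      then have "z \<in> (\<lambda>r. r - x) ` \<rat>" by (rule rev_image_eqI) simp
      with z(2) show False ..
    qed
    then show "\<bar>poly P z\<bar> \<le> C * \<bar>z\<bar> powr \<alpha>" using approx[of z] z(1) assms(3) by simp
  qed (use that in auto)
  have "\<bar>f (x + h)\<bar> \<le> (2 * C) * \<bar>h\<bar> powr \<alpha>" if "\<bar>h\<bar> < \<epsilon>" for h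
    using approx[OF that] poly_bound[OF that] by linarith
  with that[of "2 * C" \<epsilon>] \<open>C > 0\<close> \<open>\<epsilon> > 0\<close> show thesis by simp
qed

lemma not_holder_class_thomae_Rats:
  assumes "\<alpha> > 0" "x \<in> \<rat>"
  shows "\<not> holder_class \<alpha> (thomae \<theta>) x"
proof
  assume holder: "holder_class \<alpha> (thomae \<theta>) x"
  obtain C \<epsilon> where "C > 0" "\<epsilon> > 0"
    "\<And>h. \<bar>h\<bar> < \<epsilon> \<Longrightarrow> \<bar>thomae \<theta> (x + h)\<bar> \<le> C * \<bar>h\<bar> powr \<alpha>"
    using holder_class_vanishing_off_Rats[OF assms(1) holder thomae_not_Rats] by blast
  from this(3)[of 0] have "thomae \<theta> x \<le> 0" using \<open>\<epsilon> > 0\<close> by simp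
  then show False using thomae_Rats_pos[OF assms(2), of \<theta>] by simp
qed

definition good_approximations :: "real \<Rightarrow> real \<Rightarrow> (int \<times> int) set" where
  "good_approximations x \<tau> = {(p, q). p \<noteq> 0 \<and> q \<noteq> 0 \<and>
     \<bar>x - real_of_int p / real_of_int q\<bar> < \<bar>real_of_int q\<bar> powr (- \<tau>)}"

lemma irrationality_exponent_eq_Sup:
  "irrationality_exponent x = Sup (ereal ` {\<tau>. infinite (good_approximations x \<tau>)})"
  unfolding irrationality_exponent_def good_approximations_def ..

lemma finite_good_approximations_if_bounded:
  assumes "\<tau> \<ge> 0" "\<And>p q. (p, q) \<in> good_approximations x \<tau> \<Longrightarrow> \<bar>q\<bar> \<le> N"
  shows "finite (good_approximations x \<tau>)"
proof -
  define M where "M = \<lceil>real_of_int N * (\<bar>x\<bar> + 1)\<rceil>"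
  have "\<bar>p\<bar> \<le> M" if pq: "(p, q) \<in> good_approximations x \<tau>" for p q
  proof -
    have "q \<noteq> 0" "\<bar>x - real_of_int p / real_of_int q\<bar> < \<bar>real_of_int q\<bar> powr - \<tau>"
      using pq unfolding good_approximations_def by auto
    moreover have "\<bar>real_of_int q\<bar> powr - \<tau> \<le> 1"
      using \<open>q \<noteq> 0\<close> assms(1) by (simp add: powr_minus_divide ge_one_powr_ge_zero)
    ultimately have "\<bar>real_of_int p / real_of_int q\<bar> < \<bar>x\<bar> + 1" by linarith
    then have "\<bar>real_of_int p\<bar> \<le> (\<bar>x\<bar> + 1) * \<bar>real_of_int q\<bar>"
      using \<open>q \<noteq> 0\<close> by (simp add: divide_less_eq)
    also have "\<dots> \<le> (\<bar>x\<bar> + 1) * real_of_int N" using assms(2)[OF pq] by (intro mult_left_mono) auto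
    finally show "\<bar>p\<bar> \<le> M" unfolding M_def by (simp add: mult.commute) linarith
  qed
  then have "good_approximations x \<tau> \<subseteq> {-M..M} \<times> {-N..N}"
    using assms(2) by (force simp: abs_le_iff)
  then show ?thesis by (rule finite_subset) simp
qed

lemma infinite_good_approximations_one:
  assumes "x \<noteq> 0"
  shows "infinite (good_approximations x 1)"
proof -
  define N where "N = \<lceil>1 / \<bar>x\<bar>\<rceil> + 1"
  define approx where "approx n = (\<lfloor>real_of_int (N + int n) * x\<rfloor>, N + int n)" for n
  have "approx n \<in> good_approximations x 1" for n
  proof -
    define q where "q = N + int n"
    define p where "p = \<lfloor>real_of_int q * x\<rfloor>"
    have "1 / \<bar>x\<bar> > 0" using assms by simp
    moreover have q_large: "real_of_int q > 1 / \<bar>x\<bar>" unfolding q_def N_def by linarith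
    ultimately have "real_of_int q > 0" by linarith
    then have "q > 0" by simp
    have "\<bar>real_of_int q * x\<bar> > 1"
      using q_large \<open>q > 0\<close> assms by (simp add: abs_mult field_simps)
    moreover have "0 \<le> real_of_int q * x - p" "real_of_int q * x - p < 1"
      unfolding p_def by linarith+
    ultimately have "p \<noteq> 0" by (auto simp: abs_if split: if_splits)
    have "x - real_of_int p / real_of_int q = (real_of_int q * x - p) / real_of_int q"
      using \<open>q > 0\<close> by (simp add: field_simps)
    with \<open>0 \<le> real_of_int q * x - p\<close> \<open>real_of_int q * x - p < 1\<close>
    have "\<bar>x - real_of_int p / real_of_int q\<bar> < \<bar>real_of_int q\<bar> powr - 1"
      using \<open>q > 0\<close> by (simp add: powr_minus_divide divide_strict_right_mono)
    then show ?thesis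
      using \<open>p \<noteq> 0\<close> \<open>q > 0\<close> unfolding approx_def good_approximations_def p_def q_def by simp
  qed
  moreover have "inj approx" unfolding approx_def inj_def by auto
  ultimately show ?thesis
    by (meson finite_imageD finite_subset image_subsetI infinite_UNIV_nat)
qed

lemma irrationality_exponent_ge_one: "x \<noteq> 0 \<Longrightarrow> 1 \<le> irrationality_exponent x"
  unfolding irrationality_exponent_eq_Sup one_ereal_def
  by (rule Sup_upper) (simp add: infinite_good_approximations_one)

lemma irrationality_exponent_pos:
  assumes "x \<noteq> 0"
  shows "irrationality_exponent x > 0"
  using irrationality_exponent_ge_one[OF assms] by (cases "irrationality_exponent x") auto

lemma finite_good_approximations_if_exponent_less:
  "irrationality_exponent x < ereal \<tau> \<Longrightarrow> finite (good_approximations x \<tau>)"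
  unfolding irrationality_exponent_eq_Sup by (metis (mono_tags) Sup_upper image_eqI mem_Collect_eq not_le)

lemma irrationality_exponent_leI:
  assumes "\<And>\<tau>. \<tau> > \<tau>0 \<Longrightarrow> finite (good_approximations x \<tau>)"
  shows "irrationality_exponent x \<le> ereal \<tau>0"
  unfolding irrationality_exponent_eq_Sup
proof (rule Sup_least, clarify)
  fix \<tau> assume "infinite (good_approximations x \<tau>)"
  then show "ereal \<tau> \<le> ereal \<tau>0" using assms[of \<tau>] by force
qed

lemma good_approximation_denominator_bound:
  assumes "\<theta> \<ge> 0" "\<alpha> > 0" "C > 0"
    and bound: "\<And>h. \<bar>h\<bar> < \<epsilon> \<Longrightarrow> \<bar>thomae \<theta> (x + h)\<bar> \<le> C * \<bar>h\<bar> powr \<alpha>"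
    and pq: "(p, q) \<in> good_approximations x \<tau>" and "\<bar>real_of_int q\<bar> powr (- \<tau>) \<le> \<epsilon>"
  shows "\<bar>real_of_int q\<bar> powr (\<tau> * \<alpha> - \<theta>) \<le> C"
proof -
  define Q where "Q = \<bar>real_of_int q\<bar>"
  define h where "h = real_of_int p / real_of_int q - x"
  have "p \<noteq> 0" "q \<noteq> 0" and h_small: "\<bar>h\<bar> < Q powr (- \<tau>)"
    using pq unfolding good_approximations_def h_def Q_def by (auto simp: abs_minus_commute)
  have "Q powr (- \<theta>) \<le> thomae \<theta> (x + h)"
    using thomae_of_int_divide_ge[OF assms(1) \<open>p \<noteq> 0\<close> \<open>q \<noteq> 0\<close>] unfolding h_def Q_def by simp
  also have "\<dots> \<le> C * \<bar>h\<bar> powr \<alpha>" using bound[of h] h_small assms(6) unfolding Q_def by simp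
  also have "\<dots> \<le> C * (Q powr (- \<tau>)) powr \<alpha>"
    using h_small assms(2,3) by (intro mult_left_mono powr_mono2) auto
  also have "\<dots> = C * Q powr (- \<tau> * \<alpha>)" by (simp add: powr_powr)
  finally show ?thesis
    using \<open>q \<noteq> 0\<close> unfolding Q_def by (simp add: powr_diff powr_minus field_simps)
qed

lemma irrationality_exponent_le_if_holder_class_thomae:
  assumes "\<theta> \<ge> 0" "\<alpha> > 0" "holder_class \<alpha> (thomae \<theta>) x"
  shows "irrationality_exponent x \<le> ereal (\<theta> / \<alpha>)"
proof (rule irrationality_exponent_leI)
  obtain C \<epsilon> where "C > 0" "\<epsilon> > 0"
    and bound: "\<And>h. \<bar>h\<bar> < \<epsilon> \<Longrightarrow> \<bar>thomae \<theta> (x + h)\<bar> \<le> C * \<bar>h\<bar> powr \<alpha>"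
    using holder_class_vanishing_off_Rats[OF assms(2,3) thomae_not_Rats] by metis
  fix \<tau> assume "\<tau> > \<theta> / \<alpha>"
  moreover have "\<theta> / \<alpha> \<ge> 0" using assms(1,2) by simp
  ultimately have "\<tau> > 0" by linarith
  have "\<tau> * \<alpha> > \<theta>" using \<open>\<tau> > \<theta> / \<alpha>\<close> assms(2) by (simp add: field_simps)
  have "eventually (\<lambda>t::real. t powr (- \<tau>) < \<epsilon>) at_top"
    using \<open>\<tau> > 0\<close> \<open>\<epsilon> > 0\<close> by (intro order_tendstoD(2)[OF tendsto_neg_powr] filterlim_ident) auto
  moreover have "eventually (\<lambda>t::real. C < t powr (\<tau> * \<alpha> - \<theta>)) at_top"
    using \<open>\<tau> * \<alpha> > \<theta>\<close> real_powr_at_top[of "\<tau> * \<alpha> - \<theta>"] by (simp add: filterlim_at_top_dense)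
  ultimately have "eventually (\<lambda>t. t powr (- \<tau>) < \<epsilon> \<and> C < t powr (\<tau> * \<alpha> - \<theta>)) at_top"
    by (rule eventually_conj)
  then obtain N where N: "\<And>t. t \<ge> N \<Longrightarrow> t powr (- \<tau>) < \<epsilon> \<and> C < t powr (\<tau> * \<alpha> - \<theta>)"
    unfolding eventually_at_top_linorder by blast
  show "finite (good_approximations x \<tau>)"
  proof (rule finite_good_approximations_if_bounded[where N = "\<lceil>N\<rceil>"])
    fix p q assume pq: "(p, q) \<in> good_approximations x \<tau>"
    show "\<bar>q\<bar> \<le> \<lceil>N\<rceil>"
    proof (rule ccontr)
      assume "\<not> \<bar>q\<bar> \<le> \<lceil>N\<rceil>"
      then have "\<bar>real_of_int q\<bar> \<ge> N" by linarith
      with N good_approximation_denominator_bound[OF assms(1,2) \<open>C > 0\<close> bound pq] show False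
        by (meson less_imp_le not_less)
    qed
  qed (use \<open>\<tau> > 0\<close> in simp)
qed

lemma holder_class_thomae_if_finite_good_approximations:
  assumes "\<alpha> > 0" "x \<notin> \<rat>" "finite (good_approximations x (\<theta> / \<alpha>))"
  shows "holder_class \<alpha> (thomae \<theta>) x"
proof -
  define \<tau> where "\<tau> = \<theta> / \<alpha>"
  \<comment> \<open>0 is excluded from the good approximations (p \<noteq> 0), yet f_theta(0) = 1, so x must avoid it too.\<close>
  define R where "R = insert 0 ((\<lambda>(p, q). real_of_int p / real_of_int q) ` good_approximations x \<tau>)"
  have "finite R" using assms(3) unfolding R_def \<tau>_def by simp
  then obtain \<epsilon> where "\<epsilon> > 0" and avoid: "\<forall>y\<in>R. y \<noteq> x \<longrightarrow> \<epsilon> \<le> dist x y"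
    using finite_set_avoid by blast
  have far: "\<epsilon> \<le> \<bar>x - y\<bar>" if "y \<in> R" for y
  proof -
    have "R \<subseteq> \<rat>" unfolding R_def by auto
    then have "y \<noteq> x" using that assms(2) by blast
    then show ?thesis using avoid that by (simp add: dist_real_def)
  qed
  show ?thesis
  proof (rule holder_classI[OF assms(1) zero_less_one \<open>\<epsilon> > 0\<close>])
    fix h :: real assume h: "\<bar>h\<bar> < \<epsilon>"
    show "\<bar>thomae \<theta> (x + h)\<bar> \<le> 1 * \<bar>h\<bar> powr \<alpha>"
    proof (cases "x + h \<in> \<rat>")
      case True
      define b where "b = rat_denom (x + h)"
      obtain a where "b > 0" and xh: "x + h = real_of_int a / real_of_int b"
        using rat_denomE[OF True] unfolding b_def by blast
      have "x + h \<noteq> 0" using far[of 0] h unfolding R_def by auto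
      then have "a \<noteq> 0" using xh by auto
      have "(a, b) \<notin> good_approximations x \<tau>"
      proof
        assume "(a, b) \<in> good_approximations x \<tau>"
        then have "x + h \<in> R" unfolding R_def xh by (intro insertI2 rev_image_eqI) auto
        then show False using far[of "x + h"] h by simp
      qed
      moreover have "\<bar>x - real_of_int a / real_of_int b\<bar> = \<bar>h\<bar>" using xh[symmetric] by simp
      ultimately have "real_of_int b powr (- \<tau>) \<le> \<bar>h\<bar>"
        using \<open>a \<noteq> 0\<close> \<open>b > 0\<close> unfolding good_approximations_def by auto
      then have "(real_of_int b powr (- \<tau>)) powr \<alpha> \<le> \<bar>h\<bar> powr \<alpha>"
        using assms(1) by (intro powr_mono2) auto
      moreover have "(real_of_int b powr (- \<tau>)) powr \<alpha> = thomae \<theta> (x + h)"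
        using thomae_Rats[OF True \<open>x + h \<noteq> 0\<close>] assms(1) unfolding b_def \<tau>_def
        by (simp add: powr_powr)
      ultimately show ?thesis using thomae_nonneg by simp
    qed (simp add: thomae_not_Rats)
  qed
qed

lemma holder_class_thomae_imp_le_ratio:
  assumes "\<theta> > 0" "x \<notin> \<rat>" "\<alpha> \<ge> 0" "holder_class \<alpha> (thomae \<theta>) x"
  shows "ereal \<alpha> \<le> ereal \<theta> / irrationality_exponent x"
proof -
  have "irrationality_exponent x > 0"
    using assms(2) irrationality_exponent_pos by (metis Rats_0)
  show ?thesis
  proof (cases "\<alpha> = 0")
    case True
    then show ?thesis
      using assms(1) \<open>irrationality_exponent x > 0\<close> by (simp add: zero_ereal_def[symmetric])
  next
    case False
    with assms(3) have "\<alpha> > 0" by simp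
    then show ?thesis
      using irrationality_exponent_le_if_holder_class_thomae[OF _ \<open>\<alpha> > 0\<close> assms(4)] assms(1)
        ereal_le_divide_iff_swap[OF \<open>irrationality_exponent x > 0\<close> \<open>\<alpha> > 0\<close> assms(1)] by simp
  qed
qed

lemma holder_class_thomae_if_less_ratio:
  assumes "\<theta> > 0" "x \<notin> \<rat>" "\<alpha> > 0" "ereal \<alpha> < ereal \<theta> / irrationality_exponent x"
  shows "holder_class \<alpha> (thomae \<theta>) x"
proof -
  have "irrationality_exponent x > 0"
    using assms(2) irrationality_exponent_pos by (metis Rats_0)
  then have "irrationality_exponent x < ereal (\<theta> / \<alpha>)"
    using ereal_less_divide_iff_swap assms(1,3,4) by blast
  then show ?thesis
    using finite_good_approximations_if_exponent_less
      holder_class_thomae_if_finite_good_approximations[OF assms(3,2)] by blast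
qed

theorem mainTheorem3:
  fixes \<theta> :: real and x :: real
  assumes "\<theta> > 0"
  shows "holder_exponent (thomae \<theta>) x =
           (if x \<in> \<rat> then 0 else ereal \<theta> / irrationality_exponent x)"
proof -
  let ?B = "{\<alpha>. \<alpha> \<ge> 0 \<and> holder_class \<alpha> (thomae \<theta>) x}"
  have "holder_class 0 (thomae \<theta>) x"
    using thomae_nonneg thomae_le_one assms by (intro holder_class_zeroI[where M = 1]) simp
  then have "0 \<in> ?B" by simp
  show ?thesis
  proof (cases "x \<in> \<rat>")
    case True
    have "Sup (ereal ` ?B) = 0"
    proof (rule Sup_ereal_image_eqI[OF \<open>0 \<in> ?B\<close>])
      fix \<alpha> assume "\<alpha> \<in> ?B"
      with not_holder_class_thomae_Rats[OF _ True] show "ereal \<alpha> \<le> 0" by (cases "\<alpha> = 0") auto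
    qed simp
    with True show ?thesis unfolding holder_exponent_def by simp
  next
    case False
    have "Sup (ereal ` ?B) = ereal \<theta> / irrationality_exponent x"
    proof (rule Sup_ereal_image_eqI[OF \<open>0 \<in> ?B\<close>])
      fix \<alpha> assume "\<alpha> \<in> ?B"
      then show "ereal \<alpha> \<le> ereal \<theta> / irrationality_exponent x"
        using holder_class_thomae_imp_le_ratio[OF assms False] by simp
    next
      fix \<alpha> assume "0 < \<alpha>" "ereal \<alpha> < ereal \<theta> / irrationality_exponent x"
      then show "\<alpha> \<in> ?B" using holder_class_thomae_if_less_ratio[OF assms False] by simp
    qed
    with False show ?thesis unfolding holder_exponent_def by simp
  qed
qed

end
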